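(* Let $G$ be a finite group and $H$ a normal subgroup of $G$ such that $G/H$ is cyclic of order $n$. For each divisor $d$ of $n$, let $K_d$ be the unique subgroup of $G$ containing $H$ with $|K_d:H|=d$, let $\Gamma_d$ be a coset of $H$ whose order in $G/H$ is $d$, let $T_d$ be the number of $G$-conjugacy classes contained in $\Gamma_d$, let $S_d$ be the number of $G$-conjugacy classes contained in $K_d$, and let $S^*_d$ be the number of conjugacy classes of the group $K_d$ (under its own conjugation action). Then for every divisor $d$ of $n$: (1) $\displaystyle S^*_d=n\sum_{c\mid n}\sum_{a\mid c}\mu(c/a)\frac{\gcd(a,d)}{\operatorname{lcm}(a,d)}T_c$; (2) $\displaystyle S^*_d=n\sum_{c\mid n}\sum_{a\mid c}\sum_{b\mid c}\frac{\mu(c/a)\mu(c/b)}{\phi(c)}\frac{\gcd(a,d)}{\operatorname{lcm}(a,d)}S_b$, where $\mu$ is the Möbius function and $\phi$ is Euler's totient function.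
   Context: $T_d$ does not depend on the choice of the coset $\Gamma_d$ of order $d$ in $G/H$. All sums are over positive divisors. *)

theory Defs
  imports "HOL-Algebra.Algebra" "HOL-Computational_Algebra.Squarefree" "HOL-Number_Theory.Number_Theory"
begin

text \<open>Moebius function on positive integers (value 0 at 0, irrelevant here).\<close>
definition moebius_mu :: "nat \<Rightarrow> int" where
  "moebius_mu m = (if squarefree m then (-1) ^ card (prime_factors m) else 0)"

definition conj_classes :: "('a, 'b) monoid_scheme \<Rightarrow> 'a set set" where
  "conj_classes G = orbits G (carrier G) (\<lambda>g h. g \<otimes>\<^bsub>G\<^esub> h \<otimes>\<^bsub>G\<^esub> inv\<^bsub>G\<^esub> g)"

definition K_sub :: "('a, 'b) monoid_scheme \<Rightarrow> 'a set \<Rightarrow> nat \<Rightarrow> 'a set" where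
  "K_sub G H d = (THE K. subgroup K G \<and> H \<subseteq> K \<and> card (RCOSETS (G\<lparr>carrier := K\<rparr>) H) = d)"

definition n_classes_in :: "('a, 'b) monoid_scheme \<Rightarrow> 'a set \<Rightarrow> nat" where
  "n_classes_in G Y = card {Cl \<in> conj_classes G. Cl \<subseteq> Y}"

end

theory Submission
  imports Defs
begin

text \<open>
  Write \<open>G/H = \<langle>t\<rangle>\<close> and let \<open>coset k = t\<^sup>k\<close>, a coset of \<open>H\<close> in \<open>G\<close>. The number of
  commuting pairs in \<open>coset i \<times> coset j\<close> is symmetric in \<open>i, j\<close>, \<open>n\<close>-periodic and unchanged
  by \<open>(i, j) \<mapsto> (i + j, j)\<close> (via \<open>(x, y) \<mapsto> (x y, y)\<close>), so by the Euclidean algorithm it only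
  depends on \<open>gcd (gcd i j) n\<close>; divided by \<open>|H|\<close> it is a function \<open>p\<close> of that divisor
  (\<open>pair_density\<close> below).
  By orbit-stabiliser, \<open>|G|\<close> times the number of classes inside a conjugation-invariant set \<open>Y\<close>
  is the number of commuting pairs in \<open>G \<times> Y\<close>, and \<open>|K|\<close> times the class number of a group
  \<open>K\<close> is the number of commuting pairs in \<open>K \<times> K\<close>. Since \<open>K\<^sub>d\<close> is the union of the cosets
  \<open>t\<^sup>i\<close> with \<open>n/d\<close> dividing \<open>i\<close>, the numbers \<open>S\<^sup>*\<^sub>d\<close>, \<open>S\<^sub>b\<close> and \<open>T\<^sub>c\<close> become sums of \<open>p\<close>
  over gcd patterns of indices, and both formulas are identities between such sums, proved by
  writing \<open>p\<close> as a divisor sum of its Moebius transform and by Moebius inversion of \<open>S\<^sub>b\<close>.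
\<close>

section \<open>Moebius inversion\<close>

abbreviation mu :: "nat \<Rightarrow> real" where "mu k \<equiv> real_of_int (moebius_mu k)"

lemma moebius_mu_prime_mult:
  assumes "Factorial_Ring.prime p" "\<not> p dvd s" "s > 0"
  shows "moebius_mu (p * s) = - moebius_mu s"
proof -
  have cop: "coprime p s" using assms by (simp add: prime_imp_coprime)
  have sq: "squarefree (p * s) \<longleftrightarrow> squarefree s"
    using squarefree_mult_coprime[OF cop] squarefree_prime[OF assms(1)] squarefree_multD by blast
  have pf: "prime_factors (p * s) = insert p (prime_factors s)"
    using prime_factors_product[of p s] assms by (auto simp: prime_prime_factors)
  have "p \<notin> prime_factors s" using assms by auto
  then show ?thesis by (auto simp: moebius_mu_def sq pf)
qed

lemma moebius_mu_eq_0_if_square_dvd: "Factorial_Ring.prime p \<Longrightarrow> p\<^sup>2 dvd m \<Longrightarrow> moebius_mu m = 0"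
  unfolding moebius_mu_def by (metis not_prime_unit not_squarefreeI)

lemma sum_moebius_mu_divisors:
  assumes "m > 0"
  shows "(\<Sum>k | k dvd m. mu k) = (if m = 1 then 1 else 0)"
proof (cases "m = 1")
  case True
  then show ?thesis by (simp add: moebius_mu_def)
next
  case False
  then obtain p where p: "Factorial_Ring.prime p" "p dvd m" using assms prime_factor_nat by blast
  \<comment> \<open>Divisors divisible by \<open>p\<^sup>2\<close> contribute nothing; the rest pair off as \<open>s\<close> and \<open>p * s\<close>.\<close>
  have split: "(\<Sum>k | k dvd m. mu k)
      = (\<Sum>k | k dvd m \<and> \<not> p dvd k. mu k) + (\<Sum>k | k dvd m \<and> p dvd k. mu k)"
    by (subst sum.union_disjoint[symmetric]) (use assms in \<open>auto intro!: sum.cong\<close>)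
  have "(\<Sum>k | k dvd m \<and> p dvd k. mu k) = (\<Sum>k | k dvd m \<and> p dvd k \<and> \<not> p\<^sup>2 dvd k. mu k)"
    by (rule sum.mono_neutral_right) (use assms p in \<open>auto simp: moebius_mu_eq_0_if_square_dvd\<close>)
  also have "\<dots> = (\<Sum>s | s dvd m \<and> \<not> p dvd s. mu (p * s))"
  proof (rule sum.reindex_bij_witness[where i = "\<lambda>k. p * k" and j = "\<lambda>k. k div p"])
    fix s assume s: "s \<in> {s. s dvd m \<and> \<not> p dvd s}"
    have "coprime p s" using s p by (simp add: prime_imp_coprime)
    then show "p * s \<in> {k. k dvd m \<and> p dvd k \<and> \<not> p\<^sup>2 dvd k}"
      using s p by (auto simp: power2_eq_square divides_mult)
    show "p * s div p = s" using p by (simp add: prime_gt_0_nat)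
  next
    fix k assume k: "k \<in> {k. k dvd m \<and> p dvd k \<and> \<not> p\<^sup>2 dvd k}"
    then obtain s where ks: "k = p * s" by blast
    show "p * (k div p) = k" using ks p by (simp add: prime_gt_0_nat)
    show "k div p \<in> {s. s dvd m \<and> \<not> p dvd s}"
      using k ks p by (auto simp: power2_eq_square prime_gt_0_nat intro: dvd_mult_right)
  qed simp
  also have "\<dots> = - (\<Sum>s | s dvd m \<and> \<not> p dvd s. mu s)"
    by (simp add: sum_negf[symmetric])
       (intro sum.cong refl, use p assms in \<open>auto simp: moebius_mu_prime_mult dvd_pos_nat\<close>)
  finally show ?thesis using split False by simp
qed

lemma div_div_cancel: "n > 0 \<Longrightarrow> e dvd n \<Longrightarrow> n div (n div e) = (e :: nat)"
  by (simp add: div_div_eq_right)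

lemma sum_divisors_reflect:
  fixes f :: "nat \<Rightarrow> 'c :: comm_monoid_add"
  assumes "m > 0"
  shows "(\<Sum>k | k dvd m. f (m div k)) = (\<Sum>k | k dvd m. f k)"
  using assms by (intro sum.reindex_bij_witness[of _ "(div) m" "(div) m"]) (auto elim: dvdE)

lemma sum_divisor_interval_shift:
  fixes f :: "nat \<Rightarrow> 'c :: comm_monoid_add"
  assumes "g > 0" "a dvd g"
  shows "(\<Sum>e | a dvd e \<and> e dvd g. f e) = (\<Sum>k | k dvd g div a. f (a * k))"
  using assms
  by (intro sum.reindex_bij_witness[where i = "\<lambda>k. a * k" and j = "\<lambda>e. e div a"])
     (auto elim!: dvdE simp: mult_dvd_mono)

lemma sum_divisor_interval_reflect:
  fixes f :: "nat \<Rightarrow> 'c :: comm_monoid_add"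
  assumes "g > 0" "a dvd g"
  shows "(\<Sum>e | a dvd e \<and> e dvd g. f e) = (\<Sum>k | k dvd g div a. f (g div k))"
  using assms
  by (intro sum.reindex_bij_witness[where i = "\<lambda>k. g div k" and j = "\<lambda>e. g div e"])
     (auto elim!: dvdE)

lemma sum_moebius_mu_interval:
  assumes "g > 0" "a dvd g"
  shows "(\<Sum>e | a dvd e \<and> e dvd g. mu (e div a)) = (if a = g then 1 else 0)"
    and "(\<Sum>e | a dvd e \<and> e dvd g. mu (g div e)) = (if a = g then 1 else 0)"
proof -
  have a0: "a > 0" and q0: "g div a > 0" using assms by (auto elim: dvdE)
  have q1: "g div a = 1 \<longleftrightarrow> a = g" using assms a0 by (auto elim!: dvdE)
  show "(\<Sum>e | a dvd e \<and> e dvd g. mu (e div a)) = (if a = g then 1 else 0)"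
    using a0 q0 q1 by (simp add: sum_divisor_interval_shift[OF assms] sum_moebius_mu_divisors)
  have "(\<Sum>e | a dvd e \<and> e dvd g. mu (g div e)) = (\<Sum>k | k dvd g div a. mu (g div (a * k)))"
    by (rule sum_divisor_interval_shift[OF assms])
  also have "\<dots> = (\<Sum>k | k dvd g div a. mu (g div a div k))"
    by (simp add: div_mult2_eq)
  also have "\<dots> = (if a = g then 1 else 0)"
    unfolding sum_divisors_reflect[OF q0, of mu] sum_moebius_mu_divisors[OF q0] q1 ..
  finally show "(\<Sum>e | a dvd e \<and> e dvd g. mu (g div e)) = (if a = g then 1 else 0)" .
qed

definition moebius_transform :: "(nat \<Rightarrow> real) \<Rightarrow> nat \<Rightarrow> real" where
  "moebius_transform f m = (\<Sum>k | k dvd m. mu (m div k) * f k)"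

lemma sum_divisors_moebius_transform:
  assumes "g > 0"
  shows "(\<Sum>e | e dvd g. moebius_transform f e) = f g"
proof -
  have fin: "finite {e. e dvd g}" using assms by simp
  have "(\<Sum>e | e dvd g. moebius_transform f e)
      = (\<Sum>e \<in> {e. e dvd g}. \<Sum>k \<in> {k. k \<in> {k. k dvd g} \<and> k dvd e}. mu (e div k) * f k)"
    unfolding moebius_transform_def by (intro sum.cong refl) (auto intro: dvd_trans)
  also have "\<dots> = (\<Sum>k \<in> {k. k dvd g}. \<Sum>e \<in> {e. e \<in> {e. e dvd g} \<and> k dvd e}. mu (e div k) * f k)"
    by (rule sum.swap_restrict[OF fin fin])
  also have "\<dots> = (\<Sum>k \<in> {k. k dvd g}. f k * (\<Sum>e | k dvd e \<and> e dvd g. mu (e div k)))"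
    by (intro sum.cong refl) (auto simp: sum_distrib_left mult.commute intro!: sum.cong)
  also have "\<dots> = (\<Sum>k \<in> {k. k dvd g}. if k = g then f g else 0)"
    by (intro sum.cong refl) (simp add: sum_moebius_mu_interval(1)[OF assms])
  also have "\<dots> = f g" using fin by (simp add: sum.delta)
  finally show ?thesis .
qed

lemma moebius_transform_sum_divisors:
  assumes "g > 0"
  shows "moebius_transform (\<lambda>m. \<Sum>e | e dvd m. f e) g = f g"
proof -
  have fin: "finite {e. e dvd g}" using assms by simp
  have "moebius_transform (\<lambda>m. \<Sum>e | e dvd m. f e) g
      = (\<Sum>m \<in> {m. m dvd g}. \<Sum>e \<in> {e. e \<in> {e. e dvd g} \<and> e dvd m}. mu (g div m) * f e)"
    unfolding moebius_transform_def
    by (intro sum.cong refl) (auto simp: sum_distrib_left intro: dvd_trans intro!: sum.cong)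
  also have "\<dots> = (\<Sum>e \<in> {e. e dvd g}. \<Sum>m \<in> {m. m \<in> {m. m dvd g} \<and> e dvd m}. mu (g div m) * f e)"
    by (rule sum.swap_restrict[OF fin fin])
  also have "\<dots> = (\<Sum>e \<in> {e. e dvd g}. f e * (\<Sum>m | e dvd m \<and> m dvd g. mu (g div m)))"
    by (intro sum.cong refl) (auto simp: sum_distrib_left mult.commute intro!: sum.cong)
  also have "\<dots> = (\<Sum>e \<in> {e. e dvd g}. if e = g then f g else 0)"
    by (intro sum.cong refl) (simp add: sum_moebius_mu_interval(2)[OF assms])
  also have "\<dots> = f g" using fin by (simp add: sum.delta)
  finally show ?thesis .
qed

section \<open>Sums over gcd patterns\<close>

definition multiples_upto :: "nat \<Rightarrow> nat \<Rightarrow> nat set" where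
  "multiples_upto n m = {i \<in> {0<..n}. m dvd i}"

lemma card_multiples_upto:
  assumes "m > 0" "m dvd n"
  shows "card (multiples_upto n m) = n div m"
proof -
  have "multiples_upto n m = (\<lambda>k. m * k) ` {0<..n div m}"
    using assms by (auto simp: multiples_upto_def image_iff elim!: dvdE)
  moreover have "inj_on (\<lambda>k. m * k) {0<..n div m}" using assms by (auto simp: inj_on_def)
  ultimately show ?thesis by (simp add: card_image)
qed

lemma multiples_upto_subset: "multiples_upto n m \<subseteq> {0<..n}"
  by (auto simp: multiples_upto_def)

lemma card_multiples_upto_div:
  assumes "n > 0" "d dvd n"
  shows "card (multiples_upto n (n div d)) = d"
proof -
  have "n div d > 0" "n div d dvd n" using assms by (auto elim!: dvdE)
  then show ?thesis using assms by (simp add: card_multiples_upto div_div_cancel)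
qed

lemma eq_sum_moebius_transform_if_dvd:
  assumes "n > 0" "g dvd n"
  shows "p g = (\<Sum>e | e dvd n. if e dvd g then moebius_transform p e else 0)"
proof -
  have "g > 0" using assms by (auto intro: dvd_pos_nat)
  then have "p g = (\<Sum>e | e dvd g. moebius_transform p e)"
    by (rule sum_divisors_moebius_transform[symmetric])
  also have "\<dots> = (\<Sum>e \<in> {e \<in> {e. e dvd n}. e dvd g}. moebius_transform p e)"
    using assms by (intro sum.cong) (auto intro: dvd_trans)
  also have "\<dots> = (\<Sum>e | e dvd n. if e dvd g then moebius_transform p e else 0)"
    by (rule sum.inter_filter) (use assms in simp)
  finally show ?thesis .
qed

lemma sum_gcd_eq_moebius_transform:
  assumes "n > 0" "m dvd n"
  shows "(\<Sum>i\<in>{0<..n}. p (gcd i m)) = (\<Sum>e | e dvd m. moebius_transform p e * (real n / real e))"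
proof -
  have m0: "m > 0" using assms by (auto intro: dvd_pos_nat)
  have "(\<Sum>i\<in>{0<..n}. p (gcd i m))
      = (\<Sum>i\<in>{0<..n}. \<Sum>e | e dvd m. if e dvd i then moebius_transform p e else 0)"
    using m0 by (intro sum.cong refl, subst eq_sum_moebius_transform_if_dvd[where n = m])
      (auto intro!: sum.cong)
  also have "\<dots> = (\<Sum>e | e dvd m. moebius_transform p e * real (card (multiples_upto n e)))"
    by (subst sum.swap) (simp add: sum.If_cases Int_def conj_commute mult.commute multiples_upto_def)
  also have "\<dots> = (\<Sum>e | e dvd m. moebius_transform p e * (real n / real e))"
  proof (intro sum.cong refl)
    fix e assume "e \<in> {e. e dvd m}"
    then have e: "e dvd n" "e > 0" using assms m0 by (auto intro: dvd_trans dvd_pos_nat)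
    then show "moebius_transform p e * real (card (multiples_upto n e))
        = moebius_transform p e * (real n / real e)"
      by (simp add: card_multiples_upto real_of_nat_div)
  qed
  finally show ?thesis .
qed

lemma sum_gcd_pairs_multiples:
  assumes "n > 0" "d dvd n"
  shows "(\<Sum>i\<in>multiples_upto n (n div d). \<Sum>j\<in>multiples_upto n (n div d). p (gcd (gcd i j) n))
       = (\<Sum>e | e dvd n. moebius_transform p e * (real (n div lcm (n div d) e))\<^sup>2)"
proof -
  let ?Q = "multiples_upto n (n div d)"
  have fQ: "finite ?Q" by (simp add: multiples_upto_def)
  have "(\<Sum>i\<in>?Q. \<Sum>j\<in>?Q. p (gcd (gcd i j) n))
      = (\<Sum>i\<in>?Q. \<Sum>j\<in>?Q. \<Sum>e | e dvd n. if e dvd i \<and> e dvd j then moebius_transform p e else 0)"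
    using assms by (intro sum.cong refl, subst eq_sum_moebius_transform_if_dvd[where n = n])
      (auto intro!: sum.cong)
  also have "\<dots> = (\<Sum>e | e dvd n. \<Sum>i\<in>?Q. \<Sum>j\<in>?Q. if e dvd i \<and> e dvd j then moebius_transform p e else 0)"
    by (simp add: sum.swap[of _ "{e. e dvd n}"])
  also have "\<dots> = (\<Sum>e | e dvd n. moebius_transform p e * (real (n div lcm (n div d) e))\<^sup>2)"
  proof (intro sum.cong refl)
    fix e assume e: "e \<in> {e. e dvd n}"
    let ?A = "{i \<in> ?Q. e dvd i}"
    have "?A = multiples_upto n (lcm (n div d) e)"
      by (auto simp: multiples_upto_def)
    moreover have "card (multiples_upto n (lcm (n div d) e)) = n div lcm (n div d) e"
    proof (rule card_multiples_upto)
      have "n div d > 0" "e > 0"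
        using assms e by (auto simp: dvd_imp_le div_greater_zero_iff intro: dvd_pos_nat)
      then show "lcm (n div d) e > 0" by (simp add: lcm_pos_nat)
      show "lcm (n div d) e dvd n" using assms e by (auto intro: lcm_least)
    qed
    ultimately have cA: "card ?A = n div lcm (n div d) e" by simp
    have "(\<Sum>i\<in>?Q. \<Sum>j\<in>?Q. if e dvd i \<and> e dvd j then moebius_transform p e else 0)
        = (\<Sum>i\<in>?Q. if e dvd i then (\<Sum>j\<in>?Q. if e dvd j then moebius_transform p e else 0) else 0)"
      by (intro sum.cong refl) auto
    also have "\<dots> = moebius_transform p e * (real (card ?A))\<^sup>2"
      using fQ by (simp add: sum.If_cases Int_def conj_commute power2_eq_square)
    finally show "(\<Sum>i\<in>?Q. \<Sum>j\<in>?Q. if e dvd i \<and> e dvd j then moebius_transform p e else 0)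
        = moebius_transform p e * (real (n div lcm (n div d) e))\<^sup>2"
      unfolding cA .
  qed
  finally show ?thesis .
qed

lemma lcm_div_mult_gcd_div:
  fixes n d e :: nat
  assumes "n > 0" "d dvd n" "e dvd n"
  shows "lcm (n div d) e * gcd (n div e) d = n"
proof -
  obtain a where a: "n = e * a" using assms by (auto elim: dvdE)
  obtain b where b: "n = d * b" using assms by (auto elim: dvdE)
  have "e * a > 0" "d * b > 0" using a b assms by auto
  then have e0: "e > 0" and d0: "d > 0" and b0: "b > 0" by auto
  have g1: "e * gcd a d = gcd n (e * d)" using a by (simp add: gcd_mult_distrib_nat)
  have g2: "d * gcd b e = gcd n (e * d)" using b by (simp add: gcd_mult_distrib_nat mult.commute)
  have "lcm b e * gcd a d * (e * gcd b e) = (lcm b e * gcd b e) * (e * gcd a d)"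
    by (simp add: ac_simps)
  also have "\<dots> = b * e * (d * gcd b e)" using g1 g2 by (simp add: lcm_gcd_prod mult.commute)
  also have "\<dots> = n * (e * gcd b e)" using b by (simp add: ac_simps)
  finally have "lcm b e * gcd a d = n" using e0 b0 by simp
  moreover have "n div e = a" using a e0 by simp
  moreover have "n div d = b" using b d0 by simp
  ultimately show ?thesis by simp
qed

lemma gcd_div_lcm_mult_eq:
  assumes "n > 0" "d dvd n" "e dvd n"
  shows "real (gcd (n div e) d) / real (lcm (n div e) d) * real (n div e)
       = (real (n div lcm (n div d) e))\<^sup>2 / real d"
proof -
  define a where "a = n div e"
  have a0: "a > 0" and d0: "d > 0"
    using assms by (auto simp: a_def dvd_imp_le div_greater_zero_iff intro: dvd_pos_nat)
  have g0: "gcd a d > 0" using a0 by simp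
  have L: "lcm (n div d) e * gcd a d = n" unfolding a_def by (rule lcm_div_mult_gcd_div[OF assms])
  moreover have "lcm (n div d) e \<noteq> 0" using L assms(1) by (metis mult_zero_left less_irrefl)
  ultimately have ng: "n div lcm (n div d) e = gcd a d" by (metis nonzero_mult_div_cancel_left)
  have "gcd a d * lcm a d = a * d" by (rule prod_gcd_lcm_nat[symmetric])
  then have "real (gcd a d) * real (lcm a d) = real a * real d"
    by (metis of_nat_mult)
  then have "real (lcm a d) = real a * real d / real (gcd a d)"
    using g0 by (simp add: eq_divide_eq mult.commute)
  then have "real (gcd a d) / real (lcm a d) * real a = (real (gcd a d))\<^sup>2 / real d"
    using a0 d0 g0 by (simp add: power2_eq_square)
  then show ?thesis by (simp add: ng flip: a_def)
qed

lemma sum_moebius_mu_sum_gcd: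
  assumes "n > 0" "a dvd n"
  shows "(\<Sum>c | a dvd c \<and> c dvd n. mu (c div a) * (\<Sum>i\<in>{0<..n}. p (gcd i (n div c))))
       = real a * moebius_transform p (n div a)"
proof -
  have na0: "n div a > 0" using assms by (auto elim!: dvdE)
  have "(\<Sum>c | a dvd c \<and> c dvd n. mu (c div a) * (\<Sum>i\<in>{0<..n}. p (gcd i (n div c))))
      = (\<Sum>m | m dvd n div a. mu (n div m div a) * (\<Sum>i\<in>{0<..n}. p (gcd i (n div (n div m)))))"
    by (rule sum_divisor_interval_reflect[OF assms])
  also have "\<dots> = (\<Sum>m | m dvd n div a.
      mu (n div a div m) * (\<Sum>e | e dvd m. moebius_transform p e * (real n / real e)))"
  proof (intro sum.cong refl)
    fix m assume "m \<in> {m. m dvd n div a}"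
    then have mn: "m dvd n" using assms by (auto elim!: dvdE)
    then have "n div (n div m) = m" using assms(1) by (simp add: div_div_cancel)
    moreover have "n div m div a = n div a div m" by (simp flip: div_mult2_eq add: mult.commute)
    ultimately show "mu (n div m div a) * (\<Sum>i\<in>{0<..n}. p (gcd i (n div (n div m))))
        = mu (n div a div m) * (\<Sum>e | e dvd m. moebius_transform p e * (real n / real e))"
      using sum_gcd_eq_moebius_transform[OF assms(1) mn] by simp
  qed
  also have "\<dots> = moebius_transform p (n div a) * (real n / real (n div a))"
    using moebius_transform_sum_divisors[OF na0, of "\<lambda>e. moebius_transform p e * (real n / real e)"]
    by (simp add: moebius_transform_def)
  also have "real n / real (n div a) = real a" using assms by (auto elim!: dvdE)
  finally show ?thesis by simp
qed

theorem sum_gcd_pairs_moebius_formula: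
  assumes "n > 0" "d dvd n"
  shows "(\<Sum>i\<in>multiples_upto n (n div d). \<Sum>j\<in>multiples_upto n (n div d). p (gcd (gcd i j) n))
       = real d * (\<Sum>c | c dvd n. \<Sum>a | a dvd c.
           mu (c div a) * (real (gcd a d) / real (lcm a d)) * (\<Sum>i\<in>{0<..n}. p (gcd i (n div c))))"
proof -
  define w where "w a = real (gcd a d) / real (lcm a d)" for a
  define F where "F c = (\<Sum>i\<in>{0<..n}. p (gcd i (n div c)))" for c
  have d0: "d > 0" using assms by (auto intro: dvd_pos_nat)
  have fin: "finite {c. c dvd n}" using assms by simp
  have "(\<Sum>c | c dvd n. \<Sum>a | a dvd c. mu (c div a) * w a * F c)
      = (\<Sum>c \<in> {c. c dvd n}. \<Sum>a \<in> {a. a \<in> {a. a dvd n} \<and> a dvd c}. mu (c div a) * w a * F c)"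
    by (intro sum.cong refl) (auto intro: dvd_trans)
  also have "\<dots> = (\<Sum>a \<in> {a. a dvd n}. \<Sum>c \<in> {c. c \<in> {c. c dvd n} \<and> a dvd c}. mu (c div a) * w a * F c)"
    by (rule sum.swap_restrict[OF fin fin])
  also have "\<dots> = (\<Sum>a | a dvd n. w a * real a * moebius_transform p (n div a))"
  proof (intro sum.cong refl)
    fix a assume "a \<in> {a. a dvd n}"
    then have "(\<Sum>c | a dvd c \<and> c dvd n. mu (c div a) * F c) = real a * moebius_transform p (n div a)"
      unfolding F_def using assms(1) by (simp add: sum_moebius_mu_sum_gcd)
    moreover have "(\<Sum>c \<in> {c. c \<in> {c. c dvd n} \<and> a dvd c}. mu (c div a) * w a * F c)
        = w a * (\<Sum>c | a dvd c \<and> c dvd n. mu (c div a) * F c)"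
      unfolding sum_distrib_left by (intro sum.cong) auto
    ultimately show "(\<Sum>c \<in> {c. c \<in> {c. c dvd n} \<and> a dvd c}. mu (c div a) * w a * F c)
        = w a * real a * moebius_transform p (n div a)"
      by simp
  qed
  also have "\<dots> = (\<Sum>e | e dvd n. w (n div e) * real (n div e) * moebius_transform p (n div (n div e)))"
    by (rule sum_divisors_reflect[OF assms(1), symmetric])
  also have "\<dots> = (\<Sum>e | e dvd n. w (n div e) * real (n div e) * moebius_transform p e)"
    using assms(1) by (intro sum.cong refl) (simp add: div_div_cancel)
  also have "\<dots> = (\<Sum>e | e dvd n. moebius_transform p e * (real (n div lcm (n div d) e))\<^sup>2) / real d"
    unfolding sum_divide_distrib
  proof (intro sum.cong refl)
    fix e assume "e \<in> {e. e dvd n}"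
    then have "w (n div e) * real (n div e) = (real (n div lcm (n div d) e))\<^sup>2 / real d"
      unfolding w_def using gcd_div_lcm_mult_eq[OF assms] by simp
    then show "w (n div e) * real (n div e) * moebius_transform p e
        = moebius_transform p e * (real (n div lcm (n div d) e))\<^sup>2 / real d"
      by (simp add: mult.commute)
  qed
  finally show ?thesis
    using d0 unfolding sum_gcd_pairs_multiples[OF assms] w_def F_def
    by (simp add: eq_divide_eq mult.commute)
qed

lemma sum_gcd_pairs_column:
  assumes "n > 0" "b dvd n"
  shows "(\<Sum>i\<in>{0<..n}. \<Sum>j\<in>multiples_upto n (n div b). p (gcd (gcd i j) n))
       = (\<Sum>c | c dvd b. real (totient c) * (\<Sum>i\<in>{0<..n}. p (gcd i (n div c))))"
proof -
  define F where "F g = (\<Sum>i\<in>{0<..n}. p (gcd i g))" for g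
  define T where "T = {g. n div b dvd g \<and> g dvd n}"
  let ?Q = "multiples_upto n (n div b)"
  have b0: "b > 0" using assms by (auto intro: dvd_pos_nat)
  have fQ: "finite ?Q" by (simp add: multiples_upto_def)
  have nb: "n div b dvd n" using assms(2) by (metis dvd_div_mult_self dvd_triv_left)
  have fT: "finite T" unfolding T_def using assms(1) by (auto intro: finite_subset[of _ "{g. g dvd n}"])
  have "(\<Sum>i\<in>{0<..n}. \<Sum>j\<in>?Q. p (gcd (gcd i j) n)) = (\<Sum>j\<in>?Q. F (gcd j n))"
    by (subst sum.swap) (simp add: F_def gcd.assoc)
  also have "\<dots> = (\<Sum>g\<in>T. \<Sum>j | j \<in> ?Q \<and> gcd j n = g. F (gcd j n))"
    by (rule sum.group[symmetric, OF fQ fT])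
       (use nb in \<open>auto simp: T_def multiples_upto_def\<close>)
  also have "\<dots> = (\<Sum>g\<in>T. real (totient (n div g)) * F g)"
  proof (intro sum.cong refl)
    fix g assume g: "g \<in> T"
    have "{j. j \<in> ?Q \<and> gcd j n = g} = {k\<in>{0<..n}. gcd k n = g}"
      using g by (auto simp: multiples_upto_def T_def intro: dvd_trans)
    moreover have "card {k\<in>{0<..n}. gcd k n = g} = totient (n div g)"
      using g assms by (intro card_gcd_eq_totient) (auto simp: T_def)
    ultimately show "(\<Sum>j | j \<in> ?Q \<and> gcd j n = g. F (gcd j n)) = real (totient (n div g)) * F g"
      by simp
  qed
  also have "\<dots> = (\<Sum>c | c dvd n div (n div b). real (totient (n div (n div c))) * F (n div c))"
    unfolding T_def using assms by (intro sum_divisor_interval_reflect) (auto simp: div_dvd_div)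
  also have "\<dots> = (\<Sum>c | c dvd b. real (totient c) * F (n div c))"
    using assms b0 by (intro sum.cong) (auto simp: div_div_cancel intro: dvd_trans)
  finally show ?thesis by (simp add: F_def)
qed

theorem sum_gcd_pairs_totient_formula:
  assumes "n > 0" "d dvd n"
  shows "(\<Sum>i\<in>multiples_upto n (n div d). \<Sum>j\<in>multiples_upto n (n div d). p (gcd (gcd i j) n))
       = real d * (\<Sum>c | c dvd n. \<Sum>a | a dvd c. \<Sum>b | b dvd c.
           mu (c div a) * mu (c div b) / real (totient c) * (real (gcd a d) / real (lcm a d))
           * (\<Sum>i\<in>{0<..n}. \<Sum>j\<in>multiples_upto n (n div b). p (gcd (gcd i j) n)))"
proof -
  define w where "w a = real (gcd a d) / real (lcm a d)" for a
  define F where "F c = (\<Sum>i\<in>{0<..n}. p (gcd i (n div c)))" for c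
  define C where "C b = (\<Sum>i\<in>{0<..n}. \<Sum>j\<in>multiples_upto n (n div b). p (gcd (gcd i j) n))" for b
  have inversion: "(\<Sum>b | b dvd c. mu (c div b) * C b) = real (totient c) * F c" if c: "c dvd n" for c
  proof -
    have c0: "c > 0" using c assms by (auto intro: dvd_pos_nat)
    have "(\<Sum>b | b dvd c. mu (c div b) * C b)
        = moebius_transform (\<lambda>b. \<Sum>c' | c' dvd b. real (totient c') * F c') c"
      unfolding moebius_transform_def F_def C_def
      using c assms by (intro sum.cong refl) (simp add: sum_gcd_pairs_column dvd_trans)
    also have "\<dots> = real (totient c) * F c"
      by (rule moebius_transform_sum_divisors[OF c0])
    finally show ?thesis .
  qed
  have "(\<Sum>b | b dvd c. mu (c div a) * mu (c div b) / real (totient c) * w a * C b)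
      = mu (c div a) * w a * F c" if c: "c dvd n" for a c
  proof -
    have "(\<Sum>b | b dvd c. mu (c div a) * mu (c div b) / real (totient c) * w a * C b)
        = mu (c div a) / real (totient c) * w a * (\<Sum>b | b dvd c. mu (c div b) * C b)"
      unfolding sum_distrib_left by (intro sum.cong refl) (simp add: ac_simps)
    moreover have "real (totient c) > 0" using c assms by (auto intro: dvd_pos_nat)
    ultimately show ?thesis by (simp add: inversion[OF c])
  qed
  then show ?thesis
    using sum_gcd_pairs_moebius_formula[OF assms, of p] by (simp add: w_def F_def C_def)
qed

section \<open>Commuting pairs and conjugacy classes\<close>

definition commuting_pairs :: "('a, 'b) monoid_scheme \<Rightarrow> 'a set \<Rightarrow> 'a set \<Rightarrow> ('a \<times> 'a) set" where
  "commuting_pairs G A B = {(x, y). x \<in> A \<and> y \<in> B \<and> x \<otimes>\<^bsub>G\<^esub> y = y \<otimes>\<^bsub>G\<^esub> x}"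

lemma card_commuting_pairs_swap: "card (commuting_pairs G A B) = card (commuting_pairs G B A)"
proof -
  have "commuting_pairs G A B = prod.swap ` commuting_pairs G B A"
    by (auto simp: commuting_pairs_def image_iff)
  then show ?thesis by (simp add: card_image)
qed

lemma card_commuting_pairs_eq_sum:
  assumes "finite A" "finite B"
  shows "card (commuting_pairs G A B) = (\<Sum>y\<in>B. card {x \<in> A. x \<otimes>\<^bsub>G\<^esub> y = y \<otimes>\<^bsub>G\<^esub> x})"
proof -
  have "commuting_pairs G A B = prod.swap ` (SIGMA y:B. {x \<in> A. x \<otimes>\<^bsub>G\<^esub> y = y \<otimes>\<^bsub>G\<^esub> x})"
    by (auto simp: commuting_pairs_def image_iff)
  then show ?thesis using assms by (simp add: card_image)
qed

lemma card_commuting_pairs_UN: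
  assumes "finite I" "finite J" "\<And>i. i \<in> I \<Longrightarrow> finite (A i)" "\<And>j. j \<in> J \<Longrightarrow> finite (B j)"
    and "disjoint_family_on A I" "disjoint_family_on B J"
  shows "card (commuting_pairs G (\<Union>i\<in>I. A i) (\<Union>j\<in>J. B j))
       = (\<Sum>i\<in>I. \<Sum>j\<in>J. card (commuting_pairs G (A i) (B j)))"
proof -
  have fin: "finite (commuting_pairs G (A i) (B j))" if "i \<in> I" "j \<in> J" for i j
    using that assms by (auto intro: finite_subset[of _ "A i \<times> B j"] simp: commuting_pairs_def)
  have disjA: "commuting_pairs G (A i) C \<inter> commuting_pairs G (A i') C = {}"
    if "i \<in> I" "i' \<in> I" "i \<noteq> i'" for i i' C
    using disjoint_family_onD[OF assms(5) that] by (auto simp: commuting_pairs_def)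
  have disjB: "commuting_pairs G C (B j) \<inter> commuting_pairs G C (B j') = {}"
    if "j \<in> J" "j' \<in> J" "j \<noteq> j'" for j j' C
    using disjoint_family_onD[OF assms(6) that] by (auto simp: commuting_pairs_def)
  have "commuting_pairs G (\<Union>i\<in>I. A i) (\<Union>j\<in>J. B j) = (\<Union>i\<in>I. commuting_pairs G (A i) (\<Union>j\<in>J. B j))"
    by (auto simp: commuting_pairs_def)
  also have "card \<dots> = (\<Sum>i\<in>I. card (commuting_pairs G (A i) (\<Union>j\<in>J. B j)))"
  proof (intro card_UN_disjoint)
    show "\<forall>i\<in>I. finite (commuting_pairs G (A i) (\<Union>j\<in>J. B j))"
      using assms by (auto intro: finite_subset[of _ "A _ \<times> \<Union>(B ` J)"] simp: commuting_pairs_def)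
  qed (use assms disjA in auto)
  also have "\<dots> = (\<Sum>i\<in>I. card (\<Union>j\<in>J. commuting_pairs G (A i) (B j)))"
    by (intro sum.cong refl arg_cong[where f = card]) (auto simp: commuting_pairs_def)
  also have "\<dots> = (\<Sum>i\<in>I. \<Sum>j\<in>J. card (commuting_pairs G (A i) (B j)))"
    using assms fin disjB by (intro sum.cong refl card_UN_disjoint) auto
  finally show ?thesis .
qed

lemma (in group) conj_eq_iff_commute:
  "x \<in> carrier G \<Longrightarrow> y \<in> carrier G \<Longrightarrow> x \<otimes> y \<otimes> inv x = y \<longleftrightarrow> x \<otimes> y = y \<otimes> x"
  by (metis inv_solve_right m_closed)

lemma (in group) card_commuting_pairs_translate:
  assumes "A \<subseteq> carrier G" "B \<subseteq> carrier G" "C \<subseteq> carrier G"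
    and mult: "\<And>x y. x \<in> A \<Longrightarrow> y \<in> B \<Longrightarrow> x \<otimes> y \<in> C"
    and div: "\<And>z y. z \<in> C \<Longrightarrow> y \<in> B \<Longrightarrow> z \<otimes> inv y \<in> A"
  shows "card (commuting_pairs G A B) = card (commuting_pairs G C B)"
proof (rule bij_betw_same_card[of "\<lambda>(x, y). (x \<otimes> y, y)"],
    rule bij_betw_byWitness[where f' = "\<lambda>(z, y). (z \<otimes> inv y, y)"])
  show "\<forall>a\<in>commuting_pairs G A B. (\<lambda>(z, y). (z \<otimes> inv y, y)) ((\<lambda>(x, y). (x \<otimes> y, y)) a) = a"
  proof
    fix a assume "a \<in> commuting_pairs G A B"
    then obtain x y where "a = (x, y)" "x \<in> carrier G" "y \<in> carrier G"
      using assms(1,2) by (auto simp: commuting_pairs_def)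
    then show "(\<lambda>(z, y). (z \<otimes> inv y, y)) ((\<lambda>(x, y). (x \<otimes> y, y)) a) = a"
      by (simp add: m_assoc)
  qed
  show "\<forall>a\<in>commuting_pairs G C B. (\<lambda>(x, y). (x \<otimes> y, y)) ((\<lambda>(z, y). (z \<otimes> inv y, y)) a) = a"
  proof
    fix a assume "a \<in> commuting_pairs G C B"
    then obtain z y where "a = (z, y)" "z \<in> carrier G" "y \<in> carrier G"
      using assms(2,3) by (auto simp: commuting_pairs_def)
    then show "(\<lambda>(x, y). (x \<otimes> y, y)) ((\<lambda>(z, y). (z \<otimes> inv y, y)) a) = a"
      by (simp add: m_assoc)
  qed
  show "(\<lambda>(x, y). (x \<otimes> y, y)) ` commuting_pairs G A B \<subseteq> commuting_pairs G C B"
  proof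
    fix p assume "p \<in> (\<lambda>(x, y). (x \<otimes> y, y)) ` commuting_pairs G A B"
    then obtain x y where p: "p = (x \<otimes> y, y)" and xy: "x \<in> A" "y \<in> B" "x \<otimes> y = y \<otimes> x"
      by (auto simp: commuting_pairs_def)
    have "x \<otimes> y \<otimes> y = y \<otimes> (x \<otimes> y)" using xy assms(1,2) by (metis m_assoc subsetD)
    then show "p \<in> commuting_pairs G C B" using p xy(2) mult[OF xy(1,2)] by (simp add: commuting_pairs_def)
  qed
  show "(\<lambda>(z, y). (z \<otimes> inv y, y)) ` commuting_pairs G C B \<subseteq> commuting_pairs G A B"
  proof
    fix p assume "p \<in> (\<lambda>(z, y). (z \<otimes> inv y, y)) ` commuting_pairs G C B"
    then obtain z y where p: "p = (z \<otimes> inv y, y)" and zy: "z \<in> C" "y \<in> B" "z \<otimes> y = y \<otimes> z"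
      by (auto simp: commuting_pairs_def)
    have "z \<otimes> inv y \<otimes> y = y \<otimes> (z \<otimes> inv y)"
      using zy assms(2,3) by (metis inv_closed inv_solve_right m_assoc m_closed subsetD)
    then show "p \<in> commuting_pairs G A B" using p zy(2) div[OF zy(1,2)] by (simp add: commuting_pairs_def)
  qed
qed

lemma (in group) card_conj_classes_within:
  assumes fin: "finite (carrier G)" and Y: "Y \<subseteq> carrier G"
    and closed: "\<And>g y. g \<in> carrier G \<Longrightarrow> y \<in> Y \<Longrightarrow> g \<otimes> y \<otimes> inv g \<in> Y"
  shows "card {Cl \<in> conj_classes G. Cl \<subseteq> Y} * order G = card (commuting_pairs G (carrier G) Y)"
proof -
  define \<phi> where "\<phi> = (\<lambda>g. \<lambda>h\<in>carrier G. g \<otimes> h \<otimes> inv g)"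
  interpret conj: group_action G "carrier G" \<phi> unfolding \<phi>_def by (rule action_by_conjugation)
  have "orbit G (\<lambda>g h. g \<otimes> h \<otimes> inv g) x = orbit G \<phi> x" if "x \<in> carrier G" for x
    using that by (auto simp: orbit_def \<phi>_def)
  then have classes: "conj_classes G = orbits G (carrier G) \<phi>"
    unfolding conj_classes_def orbits_def by blast
  have stabilizer: "stabilizer G \<phi> y = {x \<in> carrier G. x \<otimes> y = y \<otimes> x}" if "y \<in> carrier G" for y
    using that conj_eq_iff_commute by (auto simp: stabilizer_def \<phi>_def simp del: r_inv)
  have inside: "orb \<subseteq> Y" if "orb \<in> orbits G (carrier G) \<phi>" "y \<in> orb" "y \<in> Y" for orb y
  proof -
    have "orb = orbit G \<phi> y"
      using that Y conj.disjoint_union[of orb "orbit G \<phi> y"] conj.orbit_refl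
      by (auto simp: orbits_def)
    then show ?thesis using that Y closed by (auto simp: orbit_def \<phi>_def)
  qed
  have finO: "finite (orbits G (carrier G) \<phi>)"
    using fin by (simp add: orbits_def)
  have "card (commuting_pairs G (carrier G) Y) = (\<Sum>y\<in>Y. card (stabilizer G \<phi> y))"
    using fin Y finite_subset[OF Y fin] by (simp add: card_commuting_pairs_eq_sum stabilizer subsetD)
  also have "\<dots> = (\<Sum>y\<in>carrier G. if y \<in> Y then card (stabilizer G \<phi> y) else 0)"
    using fin Y by (simp add: sum.If_cases Int_absorb1)
  also have "\<dots> = (\<Sum>orb\<in>orbits G (carrier G) \<phi>. \<Sum>y\<in>orb. if y \<in> Y then card (stabilizer G \<phi> y) else 0)"
    by (rule conj.disjoint_sum[OF fin, symmetric])
  also have "\<dots> = (\<Sum>orb\<in>orbits G (carrier G) \<phi>. if orb \<subseteq> Y then order G else 0)"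
  proof (intro sum.cong refl)
    fix orb assume orb: "orb \<in> orbits G (carrier G) \<phi>"
    show "(\<Sum>y\<in>orb. if y \<in> Y then card (stabilizer G \<phi> y) else 0) = (if orb \<subseteq> Y then order G else 0)"
    proof (cases "orb \<subseteq> Y")
      case True
      then have "(\<Sum>y\<in>orb. if y \<in> Y then card (stabilizer G \<phi> y) else 0)
          = (\<Sum>y\<in>orb. card (stabilizer G \<phi> y))"
        by (intro sum.cong) auto
      then show ?thesis using True conj.card_stablizer_sum[OF fin orb] by simp
    next
      case False
      then have "orb \<inter> Y = {}" using inside[OF orb] by blast
      then show ?thesis using False by (auto intro!: sum.neutral)
    qed
  qed
  also have "\<dots> = card {orb \<in> orbits G (carrier G) \<phi>. orb \<subseteq> Y} * order G"
    using finO by (simp add: sum.If_cases Int_def conj_commute)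
  finally show ?thesis by (simp add: classes)
qed

corollary (in group) card_conj_classes_mult_order:
  assumes "finite (carrier G)"
  shows "card (conj_classes G) * order G = card (commuting_pairs G (carrier G) (carrier G))"
proof -
  have "Cl \<subseteq> carrier G" if "Cl \<in> conj_classes G" for Cl
    using that by (auto simp: conj_classes_def orbits_def orbit_def)
  then have "{Cl \<in> conj_classes G. Cl \<subseteq> carrier G} = conj_classes G" by blast
  then show ?thesis using card_conj_classes_within[OF assms subset_refl] by simp
qed

section \<open>Groups with a cyclic quotient\<close>

lemma (in group) subgroup_eq_rcos_preimage:
  assumes "subgroup H G" "subgroup K G" "H \<subseteq> K"
  shows "K = {x \<in> carrier G. H #> x \<in> (\<lambda>a. H #> a) ` K}"
proof (intro equalityI subsetI)
  fix x assume "x \<in> {x \<in> carrier G. H #> x \<in> (\<lambda>a. H #> a) ` K}"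
  then have x: "x \<in> carrier G" and "H #> x \<in> (\<lambda>a. H #> a) ` K" by simp_all
  then obtain k where k: "k \<in> K" "H #> x = H #> k" by (auto simp: image_iff)
  have "x \<in> H #> x" by (rule rcos_self[OF x assms(1)])
  then have "x \<in> H #> k" by (simp only: k(2))
  then obtain h where "h \<in> H" "x = h \<otimes> k" unfolding r_coset_def by blast
  then show "x \<in> K" using k(1) assms(3) subgroup.m_closed[OF assms(2)] by blast
next
  fix x assume "x \<in> K"
  then show "x \<in> {x \<in> carrier G. H #> x \<in> (\<lambda>a. H #> a) ` K}"
    using subgroup.mem_carrier[OF assms(2)] by blast
qed

lemma gcd_invariant_of_euclid_steps:
  fixes f :: "nat \<Rightarrow> nat \<Rightarrow> 'c"
  assumes sym: "\<And>i j. f i j = f j i" and add: "\<And>i j. f (i + j) j = f i j"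
    and periodic: "\<And>i j. f (i + n) j = f i j"
  shows "f i j = f (gcd (gcd i j) n) 0"
proof -
  have mult: "f (r + j * k) j = f r j" for r j k
  proof (induction k)
    case (Suc k)
    have "f (r + j * Suc k) j = f ((r + j * k) + j) j" by (simp add: ac_simps)
    then show ?case using Suc add by simp
  qed simp
  have euclid: "f i j = f (gcd i j) 0" for i j
  proof (induction j arbitrary: i rule: less_induct)
    case (less j)
    show ?case
    proof (cases "j = 0")
      case False
      have "f i j = f (i mod j) j" using mult[of "i mod j" j "i div j"] by simp
      also have "\<dots> = f j (i mod j)" by (rule sym)
      also have "\<dots> = f (gcd j (i mod j)) 0" by (rule less.IH) (use False in simp)
      finally show ?thesis by (simp add: gcd_red_nat[symmetric] gcd.commute)
    qed simp
  qed
  have "f i j = f 0 (gcd i j)" using euclid sym by metis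
  also have "\<dots> = f (gcd n (gcd i j)) 0" using euclid[of n "gcd i j"] periodic[of 0] by simp
  finally show ?thesis by (simp add: gcd.commute)
qed

locale cyclic_quotient = normal H G for H and G (structure) +
  fixes n :: nat and t
  assumes finite_carrier: "finite (carrier G)"
    and order_quotient: "order (G Mod H) = n"
    and generator_in: "t \<in> carrier (G Mod H)"
    and generated_by: "subgroup_generated (G Mod H) {t} = G Mod H"

sublocale cyclic_quotient \<subseteq> Q: comm_group "G Mod H"
  using group.cyclic_imp_abelian_group[OF factorgroup_is_group] generator_in generated_by
  by (auto simp: cyclic_group_def)

context cyclic_quotient
begin

definition coset :: "nat \<Rightarrow> 'a set" where
  "coset k = t [^]\<^bsub>G Mod H\<^esub> k"

lemma finite_quotient: "finite (carrier (G Mod H))"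
  unfolding carrier_FactGroup using finite_carrier by simp

lemma ord_generator: "Q.ord t = n"
  using Q.cyclic_order_is_ord[OF generator_in] generated_by order_quotient by simp

lemma n_pos: "n > 0"
  using Q.ord_ge_1[OF finite_quotient generator_in] ord_generator by simp

lemma coset_in: "coset k \<in> carrier (G Mod H)"
  unfolding coset_def using generator_in by simp

lemma coset_mult: "coset i \<otimes>\<^bsub>G Mod H\<^esub> coset j = coset (i + j)"
  unfolding coset_def using generator_in by (simp add: Q.nat_pow_mult del: mult_FactGroup)

lemma coset_pow: "coset i [^]\<^bsub>G Mod H\<^esub> d = coset (i * d)"
  unfolding coset_def using generator_in by (simp add: Q.nat_pow_pow)

lemma coset_eq_one_iff: "coset k = \<one>\<^bsub>G Mod H\<^esub> \<longleftrightarrow> n dvd k"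
  unfolding coset_def using Q.pow_eq_id[OF generator_in] ord_generator by simp

lemma coset_add_n: "coset (k + n) = coset k"
proof -
  have "coset (k + n) = coset k \<otimes>\<^bsub>G Mod H\<^esub> coset n" by (rule coset_mult[symmetric])
  also have "coset n = \<one>\<^bsub>G Mod H\<^esub>" by (simp only: coset_eq_one_iff dvd_refl)
  finally show ?thesis by (simp only: Q.r_one[OF coset_in])
qed

lemma inj_on_coset: "inj_on coset {0<..n}"
proof -
  have "{0<..n} = {1..Q.ord t}" using ord_generator by auto
  then show ?thesis unfolding coset_def using Q.ord_inj'[OF generator_in] by simp
qed

lemma carrier_quotient: "carrier (G Mod H) = coset ` {0<..n}"
proof (rule card_subset_eq[symmetric])
  show "coset ` {0<..n} \<subseteq> carrier (G Mod H)" using coset_in by blast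
  show "card (coset ` {0<..n}) = card (carrier (G Mod H))"
    using inj_on_coset order_quotient by (simp add: card_image order_def)
qed (rule finite_quotient)

lemma ord_coset: "j \<in> {0<..n} \<Longrightarrow> Q.ord (coset j) = n div gcd n j"
  unfolding coset_def using Q.ord_pow_gen[OF generator_in] ord_generator by simp

lemma rcos_hom: "group_hom G (G Mod H) (\<lambda>x. H #> x)"
  using r_coset_hom_Mod factorgroup_is_group is_group
  by (simp add: group_hom_def group_hom_axioms_def)

lemma rcos_in_quotient: "x \<in> carrier G \<Longrightarrow> H #> x \<in> carrier (G Mod H)"
  using group_hom.hom_closed[OF rcos_hom] by blast

lemma rcos_mult:
  "x \<in> carrier G \<Longrightarrow> y \<in> carrier G \<Longrightarrow> H #> (x \<otimes> y) = (H #> x) \<otimes>\<^bsub>G Mod H\<^esub> (H #> y)"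
  using group_hom.hom_mult[OF rcos_hom] by blast

lemma rcos_inv: "x \<in> carrier G \<Longrightarrow> H #> inv x = inv\<^bsub>G Mod H\<^esub> (H #> x)"
  using group_hom.hom_inv[OF rcos_hom] by blast

lemma mem_quotient_iff:
  assumes "R \<in> carrier (G Mod H)"
  shows "x \<in> R \<longleftrightarrow> x \<in> carrier G \<and> H #> x = R"
proof -
  obtain a where a: "a \<in> carrier G" "R = H #> a" using assms unfolding carrier_FactGroup by blast
  show ?thesis
  proof
    assume x: "x \<in> R"
    then have "x \<in> carrier G" using a r_coset_subset_G[OF subset a(1)] by blast
    moreover have "H #> a = H #> x" using repr_independence[OF _ a(1) subgroup_axioms] x a by blast
    ultimately show "x \<in> carrier G \<and> H #> x = R" using a by simp
  qed (use rcos_self[OF _ subgroup_axioms] in blast)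
qed

lemma mem_coset_iff: "x \<in> coset k \<longleftrightarrow> x \<in> carrier G \<and> H #> x = coset k"
  using mem_quotient_iff[OF coset_in] .

lemma coset_subset: "coset k \<subseteq> carrier G"
  using mem_coset_iff by blast

lemma finite_coset: "finite (coset k)"
  using coset_subset finite_carrier finite_subset by blast

lemma card_coset: "card (coset k) = card H"
  using card_rcosets_equal[OF _ subset] coset_in[of k] by (simp add: FactGroup_def)

lemma carrier_eq_UN_coset: "carrier G = (\<Union>k\<in>{0<..n}. coset k)"
proof (intro equalityI subsetI)
  fix x assume x: "x \<in> carrier G"
  then obtain k where "k \<in> {0<..n}" "H #> x = coset k"
    using rcos_in_quotient carrier_quotient by (metis imageE)
  then show "x \<in> (\<Union>k\<in>{0<..n}. coset k)" using x mem_coset_iff by blast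
qed (use coset_subset in blast)

lemma disjoint_family_coset: "disjoint_family_on coset {0<..n}"
  unfolding disjoint_family_on_def
proof (intro ballI impI)
  fix i j assume ij: "i \<in> {0<..n}" "j \<in> {0<..n}" "i \<noteq> j"
  show "coset i \<inter> coset j = {}"
  proof (rule ccontr)
    assume "coset i \<inter> coset j \<noteq> {}"
    then obtain x where "x \<in> coset i" "x \<in> coset j" by blast
    then have "coset i = coset j" using mem_coset_iff by metis
    then show False using inj_onD[OF inj_on_coset _ ij(1,2)] ij(3) by blast
  qed
qed

lemma mult_mem_coset: "x \<in> coset i \<Longrightarrow> y \<in> coset j \<Longrightarrow> x \<otimes> y \<in> coset (i + j)"
  by (simp add: mem_coset_iff rcos_mult coset_mult del: mult_FactGroup)

lemma div_mem_coset:
  assumes "z \<in> coset (i + j)" "y \<in> coset j"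
  shows "z \<otimes> inv y \<in> coset i"
proof -
  have z: "z \<in> carrier G" "H #> z = coset (i + j)" and y: "y \<in> carrier G" "H #> y = coset j"
    using assms mem_coset_iff by auto
  have "H #> (z \<otimes> inv y) = coset (i + j) \<otimes>\<^bsub>G Mod H\<^esub> inv\<^bsub>G Mod H\<^esub> coset j"
    using rcos_mult[OF z(1) inv_closed[OF y(1)]] rcos_inv[OF y(1)] z y by simp
  also have "\<dots> = coset i"
    by (simp only: coset_mult[symmetric] Q.m_assoc[OF coset_in coset_in Q.inv_closed[OF coset_in]]
        Q.r_inv[OF coset_in] Q.r_one[OF coset_in])
  finally show ?thesis using z y by (simp add: mem_coset_iff)
qed

lemma conj_mem_coset:
  assumes g: "g \<in> carrier G" and x: "x \<in> coset k"
  shows "g \<otimes> x \<otimes> inv g \<in> coset k"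
proof -
  have xG: "x \<in> carrier G" using x mem_coset_iff by blast
  let ?g = "H #> g" and ?x = "H #> x"
  have in_Q: "?g \<in> carrier (G Mod H)" "?x \<in> carrier (G Mod H)" using g xG rcos_in_quotient by auto
  have "H #> (g \<otimes> x \<otimes> inv g) = ?g \<otimes>\<^bsub>G Mod H\<^esub> ?x \<otimes>\<^bsub>G Mod H\<^esub> inv\<^bsub>G Mod H\<^esub> ?g"
    using g xG by (simp add: rcos_mult rcos_inv del: mult_FactGroup)
  also have "\<dots> = ?x \<otimes>\<^bsub>G Mod H\<^esub> ?g \<otimes>\<^bsub>G Mod H\<^esub> inv\<^bsub>G Mod H\<^esub> ?g"
    by (simp only: Q.m_comm[OF in_Q])
  also have "\<dots> = ?x"
    by (simp only: Q.m_assoc[OF in_Q(2,1) Q.inv_closed[OF in_Q(1)]] Q.r_inv[OF in_Q(1)] Q.r_one[OF in_Q(2)])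
  finally show ?thesis using g xG x by (simp add: mem_coset_iff)
qed

definition commuting_count :: "nat \<Rightarrow> nat \<Rightarrow> nat" where
  "commuting_count i j = card (commuting_pairs G (coset i) (coset j))"

lemma commuting_count_gcd: "commuting_count i j = commuting_count (gcd (gcd i j) n) 0"
proof (rule gcd_invariant_of_euclid_steps)
  show "commuting_count i j = commuting_count j i" for i j
    unfolding commuting_count_def by (rule card_commuting_pairs_swap)
  show "commuting_count (i + j) j = commuting_count i j" for i j
    unfolding commuting_count_def using coset_subset mult_mem_coset div_mem_coset
    by (intro card_commuting_pairs_translate[symmetric]) auto
  show "commuting_count (i + n) j = commuting_count i j" for i j
    by (simp add: commuting_count_def coset_add_n)
qed

lemma card_H_pos: "card H > 0"
proof -
  have "finite H" using finite_carrier subset finite_subset by blast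
  moreover have "\<one> \<in> H" by simp
  ultimately show ?thesis using card_gt_0_iff by blast
qed

lemma order_eq: "order G = n * card H"
proof -
  have "card (rcosets H) = n" using order_quotient by (simp add: order_def FactGroup_def)
  then show ?thesis using lagrange[OF subgroup_axioms] by simp
qed

definition pair_density :: "nat \<Rightarrow> real" where
  "pair_density g = real (commuting_count g 0) / real (card H)"

lemma card_commuting_pairs_cosets:
  assumes "I \<subseteq> {0<..n}" "J \<subseteq> {0<..n}"
  shows "real (card (commuting_pairs G (\<Union>i\<in>I. coset i) (\<Union>j\<in>J. coset j)))
       = real (card H) * (\<Sum>i\<in>I. \<Sum>j\<in>J. pair_density (gcd (gcd i j) n))"
proof -
  have "card (commuting_pairs G (\<Union>i\<in>I. coset i) (\<Union>j\<in>J. coset j)) = (\<Sum>i\<in>I. \<Sum>j\<in>J. commuting_count i j)"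
    unfolding commuting_count_def using assms finite_subset[OF assms(1)] finite_subset[OF assms(2)]
    by (intro card_commuting_pairs_UN)
       (auto simp: finite_coset intro: disjoint_family_on_mono[OF _ disjoint_family_coset])
  moreover have "real (commuting_count i j) = real (card H) * pair_density (gcd (gcd i j) n)" for i j
    using card_H_pos by (simp add: pair_density_def commuting_count_gcd[of i j])
  ultimately show ?thesis by (simp add: sum_distrib_left)
qed

lemma n_classes_in_cosets:
  assumes "J \<subseteq> {0<..n}"
  shows "real (n_classes_in G (\<Union>j\<in>J. coset j)) * real n
       = (\<Sum>i\<in>{0<..n}. \<Sum>j\<in>J. pair_density (gcd (gcd i j) n))"
proof -
  have "n_classes_in G (\<Union>j\<in>J. coset j) * order G
      = card (commuting_pairs G (\<Union>i\<in>{0<..n}. coset i) (\<Union>j\<in>J. coset j))"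
    unfolding n_classes_in_def carrier_eq_UN_coset[symmetric]
    using coset_subset conj_mem_coset by (intro card_conj_classes_within finite_carrier) blast+
  then have "real (n_classes_in G (\<Union>j\<in>J. coset j)) * real n * real (card H)
      = real (card (commuting_pairs G (\<Union>i\<in>{0<..n}. coset i) (\<Union>j\<in>J. coset j)))"
    unfolding order_eq by (metis of_nat_mult mult.assoc)
  also have "\<dots> = real (card H) * (\<Sum>i\<in>{0<..n}. \<Sum>j\<in>J. pair_density (gcd (gcd i j) n))"
    by (rule card_commuting_pairs_cosets[OF subset_refl assms])
  finally show ?thesis using card_H_pos by simp
qed

definition Kd :: "nat \<Rightarrow> 'a set" where
  "Kd d = {x \<in> carrier G. (H #> x) [^]\<^bsub>G Mod H\<^esub> d = \<one>\<^bsub>G Mod H\<^esub>}"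

lemma Kd_eq_UN:
  assumes "d dvd n"
  shows "Kd d = (\<Union>i\<in>multiples_upto n (n div d). coset i)"
proof -
  have d0: "d \<noteq> 0" using assms n_pos by auto
  have key: "x \<in> Kd d \<longleftrightarrow> n div d dvd i" if "x \<in> coset i" for x i
  proof -
    have x: "x \<in> carrier G" "H #> x = coset i" using that mem_coset_iff by auto
    then have "x \<in> Kd d \<longleftrightarrow> coset i [^]\<^bsub>G Mod H\<^esub> d = \<one>\<^bsub>G Mod H\<^esub>"
      by (simp add: Kd_def del: one_FactGroup)
    also have "\<dots> \<longleftrightarrow> n div d dvd i"
      by (simp only: coset_pow coset_eq_one_iff div_dvd_iff_mult[OF d0 assms])
    finally show ?thesis .
  qed
  show ?thesis
  proof (intro equalityI subsetI)
    fix x assume x: "x \<in> Kd d"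
    then obtain i where "i \<in> {0<..n}" "x \<in> coset i"
      using carrier_eq_UN_coset by (auto simp: Kd_def)
    then show "x \<in> (\<Union>i\<in>multiples_upto n (n div d). coset i)"
      using key x by (auto simp: multiples_upto_def)
  next
    fix x assume "x \<in> (\<Union>i\<in>multiples_upto n (n div d). coset i)"
    then obtain i where "n div d dvd i" "x \<in> coset i" by (auto simp: multiples_upto_def)
    then show "x \<in> Kd d" using key by blast
  qed
qed


lemma Kd_subgroup: "subgroup (Kd d) G"
proof (rule subgroupI)
  show "Kd d \<subseteq> carrier G" by (auto simp: Kd_def)
  have "H #> \<one> = \<one>\<^bsub>G Mod H\<^esub>" using subset by simp
  then show "Kd d \<noteq> {}" by (auto simp: Kd_def simp del: one_FactGroup)
next
  fix a assume "a \<in> Kd d"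
  then have a: "a \<in> carrier G" "(H #> a) [^]\<^bsub>G Mod H\<^esub> d = \<one>\<^bsub>G Mod H\<^esub>"
    by (auto simp: Kd_def simp del: one_FactGroup)
  have "(H #> inv a) [^]\<^bsub>G Mod H\<^esub> d = inv\<^bsub>G Mod H\<^esub> ((H #> a) [^]\<^bsub>G Mod H\<^esub> d)"
    using rcos_inv[OF a(1)] Q.nat_pow_inv[OF rcos_in_quotient[OF a(1)]] by simp
  then show "inv a \<in> Kd d" using a by (simp add: Kd_def del: one_FactGroup)
next
  fix a b assume "a \<in> Kd d" "b \<in> Kd d"
  then have a: "a \<in> carrier G" "(H #> a) [^]\<^bsub>G Mod H\<^esub> d = \<one>\<^bsub>G Mod H\<^esub>"
    and b: "b \<in> carrier G" "(H #> b) [^]\<^bsub>G Mod H\<^esub> d = \<one>\<^bsub>G Mod H\<^esub>"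
    by (auto simp: Kd_def simp del: one_FactGroup)
  have "(H #> (a \<otimes> b)) [^]\<^bsub>G Mod H\<^esub> d
      = (H #> a) [^]\<^bsub>G Mod H\<^esub> d \<otimes>\<^bsub>G Mod H\<^esub> (H #> b) [^]\<^bsub>G Mod H\<^esub> d"
    using rcos_mult[OF a(1) b(1)] Q.pow_mult_distrib[OF Q.m_comm] rcos_in_quotient a(1) b(1) by simp
  then show "a \<otimes> b \<in> Kd d" using a b by (simp add: Kd_def del: one_FactGroup mult_FactGroup)
qed

lemma H_subset_Kd: "H \<subseteq> Kd d"
proof
  fix x assume x: "x \<in> H"
  then have "x \<in> carrier G" "H #> x = \<one>\<^bsub>G Mod H\<^esub>"
    using subset coset_join2[OF _ subgroup_axioms x] by auto
  then show "x \<in> Kd d" by (simp add: Kd_def del: one_FactGroup)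
qed

lemma rcos_image_Kd:
  assumes "d dvd n"
  shows "(\<lambda>a. H #> a) ` Kd d = coset ` multiples_upto n (n div d)"
proof -
  have "(\<lambda>a. H #> a) ` coset i = {coset i}" for i
  proof -
    have "coset i \<noteq> {}"
      using coset_in[of i] by (auto simp: carrier_FactGroup mem_quotient_iff[OF coset_in] intro: rcos_self[OF _ subgroup_axioms])
    then show ?thesis using mem_coset_iff by auto
  qed
  then show ?thesis unfolding Kd_eq_UN[OF assms] image_UN by auto
qed

lemma card_rcos_image_Kd:
  assumes "d dvd n"
  shows "card ((\<lambda>a. H #> a) ` Kd d) = d"
proof -
  have "card (coset ` multiples_upto n (n div d)) = card (multiples_upto n (n div d))"
    using inj_on_subset[OF inj_on_coset multiples_upto_subset] by (simp add: card_image)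
  also have "\<dots> = d" by (rule card_multiples_upto_div[OF n_pos assms])
  finally show ?thesis by (simp add: rcos_image_Kd[OF assms])
qed

lemma RCOSETS_restrict: "RCOSETS (G\<lparr>carrier := K\<rparr>) H = (\<lambda>a. H #> a) ` K"
  unfolding RCOSETS_def r_coset_def by auto

lemma K_sub_eq:
  assumes "d dvd n"
  shows "K_sub G H d = Kd d"
  unfolding K_sub_def
proof (rule the_equality)
  show "subgroup (Kd d) G \<and> H \<subseteq> Kd d \<and> card (RCOSETS (G\<lparr>carrier := Kd d\<rparr>) H) = d"
    using Kd_subgroup H_subset_Kd card_rcos_image_Kd[OF assms] by (simp add: RCOSETS_restrict)
next
  fix K assume K: "subgroup K G \<and> H \<subseteq> K \<and> card (RCOSETS (G\<lparr>carrier := K\<rparr>) H) = d"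
  let ?S = "(\<lambda>a. H #> a) ` K"
  have S: "subgroup ?S (G Mod H)"
    using group_hom.subgroup_img_is_subgroup[OF rcos_hom] K by blast
  have card_S: "card ?S = d" using K by (simp add: RCOSETS_restrict)
  \<comment> \<open>By Lagrange in the image \<open>?S\<close>, whose order is \<open>d\<close>, every coset of \<open>K\<close> has order dividing \<open>d\<close>.\<close>
  have pow_S: "q [^]\<^bsub>G Mod H\<^esub> d = \<one>\<^bsub>G Mod H\<^esub>" if "q \<in> ?S" for q
  proof -
    have "group ((G Mod H)\<lparr>carrier := ?S\<rparr>)" by (rule subgroup.subgroup_is_group[OF S Q.is_group])
    then have "q [^]\<^bsub>(G Mod H)\<lparr>carrier := ?S\<rparr>\<^esub> order ((G Mod H)\<lparr>carrier := ?S\<rparr>) = \<one>\<^bsub>(G Mod H)\<lparr>carrier := ?S\<rparr>\<^esub>"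
      using group.pow_order_eq_1 that by fastforce
    then show ?thesis using card_S by (simp add: Q.nat_pow_consistent[symmetric] order_def del: one_FactGroup)
  qed
  have "K \<subseteq> Kd d"
    using pow_S K subgroup.subset by (fastforce simp: Kd_def simp del: one_FactGroup)
  moreover have "finite ((\<lambda>a. H #> a) ` Kd d)"
    using finite_carrier Kd_subgroup subgroup.subset by (metis finite_imageI finite_subset)
  ultimately have "?S = (\<lambda>a. H #> a) ` Kd d"
    using card_S card_rcos_image_Kd[OF assms] by (intro card_subset_eq) auto
  then show "K = Kd d"
    using subgroup_eq_rcos_preimage[OF subgroup_axioms] K Kd_subgroup H_subset_Kd by metis
qed

lemma coset_of_ord:
  assumes "R \<in> carrier (G Mod H)" "Q.ord R = c"
  obtains j where "j \<in> {0<..n}" "R = coset j" "gcd j n = n div c"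
proof -
  obtain j where j: "j \<in> {0<..n}" "R = coset j" using assms(1) carrier_quotient by blast
  then have "c = n div gcd n j" using assms(2) ord_coset by simp
  then have "n div c = gcd j n" using n_pos by (simp add: div_div_cancel gcd.commute)
  then show thesis using that j by simp
qed

lemma n_classes_in_of_ord:
  assumes "R \<in> carrier (G Mod H)" "Q.ord R = c"
  shows "real (n_classes_in G R) = (\<Sum>i\<in>{0<..n}. pair_density (gcd i (n div c))) / real n"
proof -
  obtain j where "j \<in> {0<..n}" "R = coset j" "gcd j n = n div c" by (rule coset_of_ord[OF assms])
  then show ?thesis using n_classes_in_cosets[of "{j}"] n_pos by (simp add: gcd.assoc eq_divide_eq)
qed

lemma n_classes_in_K_sub:
  assumes "d dvd n"
  shows "real (n_classes_in G (K_sub G H d))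
       = (\<Sum>i\<in>{0<..n}. \<Sum>j\<in>multiples_upto n (n div d). pair_density (gcd (gcd i j) n)) / real n"
  using n_classes_in_cosets[OF multiples_upto_subset] n_pos
  by (simp add: K_sub_eq[OF assms] Kd_eq_UN[OF assms] eq_divide_eq)

lemma card_conj_classes_K_sub:
  assumes "d dvd n"
  shows "real (card (conj_classes (G\<lparr>carrier := K_sub G H d\<rparr>)))
       = (\<Sum>i\<in>multiples_upto n (n div d). \<Sum>j\<in>multiples_upto n (n div d). pair_density (gcd (gcd i j) n)) / real d"
proof -
  let ?Q = "multiples_upto n (n div d)"
  have Q: "?Q \<subseteq> {0<..n}" by (rule multiples_upto_subset)
  interpret K: group "G\<lparr>carrier := Kd d\<rparr>" by (rule subgroup.subgroup_is_group[OF Kd_subgroup is_group])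
  have "card (Kd d) = (\<Sum>i\<in>?Q. card (coset i))"
    unfolding Kd_eq_UN[OF assms] using Q finite_coset disjoint_family_coset
    by (intro card_UN_disjoint) (auto simp: multiples_upto_def disjoint_family_on_def)
  also have "\<dots> = d * card H"
    by (simp add: card_coset card_multiples_upto_div[OF n_pos assms])
  finally have order_K: "order (G\<lparr>carrier := Kd d\<rparr>) = d * card H" by (simp add: order_def)
  have "card (conj_classes (G\<lparr>carrier := Kd d\<rparr>)) * (d * card H)
      = card (commuting_pairs G (\<Union>i\<in>?Q. coset i) (\<Union>j\<in>?Q. coset j))"
    using K.card_conj_classes_mult_order finite_carrier Kd_subgroup subgroup.subset finite_subset
    by (fastforce simp: order_K commuting_pairs_def Kd_eq_UN[OF assms, symmetric])
  then have "real (card (conj_classes (G\<lparr>carrier := Kd d\<rparr>))) * real d * real (card H)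
      = real (card H) * (\<Sum>i\<in>?Q. \<Sum>j\<in>?Q. pair_density (gcd (gcd i j) n))"
    unfolding card_commuting_pairs_cosets[OF Q Q, symmetric] by (metis of_nat_mult mult.assoc)
  then show ?thesis
    using card_H_pos assms n_pos by (simp add: K_sub_eq[OF assms] eq_divide_eq dvd_pos_nat)
qed

end

theorem theorem6p1:
  fixes G :: "('a, 'b) monoid_scheme" and H :: "'a set" and n d :: nat
    and \<Gamma> :: "nat \<Rightarrow> 'a set"
  assumes "group G" and "finite (carrier G)" and "H \<lhd> G"
    and "cyclic_group (G Mod H)" and "order (G Mod H) = n"
    and "\<And>c. c dvd n \<Longrightarrow> \<Gamma> c \<in> carrier (G Mod H) \<and> group.ord (G Mod H) (\<Gamma> c) = c"
    and "d dvd n"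
  shows "(real (card (conj_classes (G\<lparr>carrier := K_sub G H d\<rparr>))) =
           real n * (\<Sum>c | c dvd n. \<Sum>a | a dvd c.
              real_of_int (moebius_mu (c div a)) * (real (gcd a d) / real (lcm a d))
              * real (n_classes_in G (\<Gamma> c)))) \<and>
         real (card (conj_classes (G\<lparr>carrier := K_sub G H d\<rparr>))) =
           real n * (\<Sum>c | c dvd n. \<Sum>a | a dvd c. \<Sum>b | b dvd c.
              real_of_int (moebius_mu (c div a) * moebius_mu (c div b)) / real (totient c)
              * (real (gcd a d) / real (lcm a d))
              * real (n_classes_in G (K_sub G H b)))"
proof -
  interpret normal H G by (rule assms(3))
  obtain t where "t \<in> carrier (G Mod H)" "subgroup_generated (G Mod H) {t} = G Mod H"
    using assms(4) unfolding cyclic_group_def by blast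
  then interpret cyclic_quotient H G n t by unfold_locales (use assms in auto)
  define w where "w a = real (gcd a d) / real (lcm a d)" for a
  define T where "T c = (\<Sum>i\<in>{0<..n}. pair_density (gcd i (n div c)))" for c
  define S where "S b = (\<Sum>i\<in>{0<..n}. \<Sum>j\<in>multiples_upto n (n div b). pair_density (gcd (gcd i j) n))" for b
  have classes_\<Gamma>: "real (n_classes_in G (\<Gamma> c)) = T c / real n" if "c dvd n" for c
    using n_classes_in_of_ord assms(6)[OF that] by (simp add: T_def)
  have classes_K: "real (n_classes_in G (K_sub G H b)) = S b / real n" if "b dvd n" for b
    using n_classes_in_K_sub[OF that] by (simp add: S_def)
  have d0: "real d > 0" using assms(7) n_pos by (simp add: dvd_pos_nat)
  have "real (card (conj_classes (G\<lparr>carrier := K_sub G H d\<rparr>)))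
      = (\<Sum>c | c dvd n. \<Sum>a | a dvd c. mu (c div a) * w a * T c)"
    using d0 by (simp add: card_conj_classes_K_sub[OF assms(7)] sum_gcd_pairs_moebius_formula[OF n_pos assms(7)] w_def T_def)
  also have "\<dots> = real n * (\<Sum>c | c dvd n. \<Sum>a | a dvd c. mu (c div a) * w a * real (n_classes_in G (\<Gamma> c)))"
    using n_pos unfolding sum_distrib_left by (intro sum.cong refl) (simp add: classes_\<Gamma>)
  finally have formula1: "real (card (conj_classes (G\<lparr>carrier := K_sub G H d\<rparr>)))
      = real n * (\<Sum>c | c dvd n. \<Sum>a | a dvd c. mu (c div a) * w a * real (n_classes_in G (\<Gamma> c)))" .
  have "real (card (conj_classes (G\<lparr>carrier := K_sub G H d\<rparr>)))
      = (\<Sum>c | c dvd n. \<Sum>a | a dvd c. \<Sum>b | b dvd c. mu (c div a) * mu (c div b) / real (totient c) * w a * S b)"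
    using d0 by (simp add: card_conj_classes_K_sub[OF assms(7)] sum_gcd_pairs_totient_formula[OF n_pos assms(7)] w_def S_def)
  also have "\<dots> = real n * (\<Sum>c | c dvd n. \<Sum>a | a dvd c. \<Sum>b | b dvd c.
        mu (c div a) * mu (c div b) / real (totient c) * w a * real (n_classes_in G (K_sub G H b)))"
    using n_pos unfolding sum_distrib_left by (intro sum.cong refl) (auto simp: classes_K intro: dvd_trans)
  finally show ?thesis using formula1 by (simp add: w_def)
qed

end
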